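(* Let $\mathcal{H}$ be a hypertree, $T$ a host tree of $\mathcal{H}$, and $uv$ an edge of $T$. Then $I_\mathcal{H}(uv)$ is a basic set of $\mathcal{H}$. Moreover, every basic set of $\mathcal{H}$ is of the form $I_\mathcal{H}(uv)$ for some edge $uv$ of $T$.
   Context: A hypergraph $\mathcal{H}$ has a finite vertex set $V(\mathcal{H})$ and a finite family of nonempty subsets (edges). A host tree of $\mathcal{H}$ is a tree with vertex set $V(\mathcal{H})$ in which every edge of $\mathcal{H}$ induces a connected subgraph; $\mathcal{H}$ is a hypertree if it has a host tree. For $V'\subseteq V(\mathcal{H})$, $I_\mathcal{H}(V')$ is the intersection of all edges of $\mathcal{H}$ containing $V'$, or $V(\mathcal{H})$ if none does; $I_\mathcal{H}(uv)=I_\mathcal{H}(\{u,v\})$. A union of sets is connected if the intersection graph of the sets is connected. The completion $Comp(\mathcal{H})$ is the hypergraph without repeated edges on $V(\mathcal{H})$ whose edges are $V(\mathcal{H})$, all one-element subsets, and all proper subsets of $V(\mathcal{H})$ obtainable from edges of $\mathcal{H}$ by repeated nonempty intersections and connected unions. A basic set of $\mathcal{H}$ is an edge of $Comp(\mathcal{H})$ with more than one vertex that cannot be expressed as a connected union of strictly smaller edges of $Comp(\mathcal{H})$. *)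

theory Defs
  imports Main
begin

text \<open>A hypergraph is given by a finite vertex set V and a finite family E of
nonempty subsets of V (repeated edges are irrelevant for all notions below).\<close>
definition hypergraph :: "'a set \<Rightarrow> 'a set set \<Rightarrow> bool" where
  "hypergraph V E \<longleftrightarrow> finite V \<and> finite E \<and> (\<forall>e\<in>E. e \<noteq> {} \<and> e \<subseteq> V)"

definition graph_on :: "'a set \<Rightarrow> 'a set set \<Rightarrow> bool" where
  "graph_on V T \<longleftrightarrow> (\<forall>e\<in>T. \<exists>x y. x \<noteq> y \<and> x \<in> V \<and> y \<in> V \<and> e = {x, y})"

definition connected_graph :: "'a set \<Rightarrow> 'a set set \<Rightarrow> bool" where
  "connected_graph S T \<longleftrightarrow>
     (\<forall>x\<in>S. \<forall>y\<in>S. (x, y) \<in> {(a, b). a \<in> S \<and> b \<in> S \<and> {a, b} \<in> T}\<^sup>*)"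

definition is_tree :: "'a set \<Rightarrow> 'a set set \<Rightarrow> bool" where
  "is_tree V T \<longleftrightarrow> graph_on V T \<and> connected_graph V T \<and>
     (\<forall>e\<in>T. \<not> connected_graph V (T - {e}))"

definition induced :: "'a set set \<Rightarrow> 'a set \<Rightarrow> 'a set set" where
  "induced T S = {e \<in> T. e \<subseteq> S}"

definition host_tree :: "'a set \<Rightarrow> 'a set set \<Rightarrow> 'a set set \<Rightarrow> bool" where
  "host_tree V E T \<longleftrightarrow> is_tree V T \<and> (\<forall>e\<in>E. connected_graph e (induced T e))"

definition hypertree :: "'a set \<Rightarrow> 'a set set \<Rightarrow> bool" where
  "hypertree V E \<longleftrightarrow> hypergraph V E \<and> (\<exists>T. host_tree V E T)"

definition I_H :: "'a set \<Rightarrow> 'a set set \<Rightarrow> 'a set \<Rightarrow> 'a set" where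
  "I_H V E V' = (if \<exists>e\<in>E. V' \<subseteq> e then \<Inter>{e \<in> E. V' \<subseteq> e} else V)"

definition connected_family :: "'a set set \<Rightarrow> bool" where
  "connected_family F \<longleftrightarrow> F \<noteq> {} \<and>
     (\<forall>A\<in>F. \<forall>B\<in>F. (A, B) \<in> {(X, Y). X \<in> F \<and> Y \<in> F \<and> X \<inter> Y \<noteq> {}}\<^sup>*)"

inductive_set gen_sets :: "'a set set \<Rightarrow> 'a set set" for E :: "'a set set" where
  base: "e \<in> E \<Longrightarrow> e \<in> gen_sets E"
| inter: "A \<in> gen_sets E \<Longrightarrow> B \<in> gen_sets E \<Longrightarrow> A \<inter> B \<noteq> {} \<Longrightarrow> A \<inter> B \<in> gen_sets E"
| union: "\<forall>A\<in>F. A \<in> gen_sets E \<Longrightarrow> finite F \<Longrightarrow> connected_family F \<Longrightarrow> \<Union>F \<in> gen_sets E"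

text \<open>Edges of the completion Comp(H) (as a set, so without repetitions).\<close>
definition Comp :: "'a set \<Rightarrow> 'a set set \<Rightarrow> 'a set set" where
  "Comp V E = {V} \<union> {{v} | v. v \<in> V} \<union> {S \<in> gen_sets E. S \<subset> V}"

definition basic_set :: "'a set \<Rightarrow> 'a set set \<Rightarrow> 'a set \<Rightarrow> bool" where
  "basic_set V E S \<longleftrightarrow> S \<in> Comp V E \<and> card S > 1 \<and>
     \<not> (\<exists>F. F \<subseteq> Comp V E \<and> connected_family F \<and> (\<forall>A\<in>F. A \<subset> S) \<and> \<Union>F = S)"

end

theory Submission
  imports Defs
begin

text \<open>Every edge of Comp(H) induces a subtree of the host tree T, because subtrees are closed
  under nonempty intersections and connected unions. If a tree edge uv lies in a connected union
  of subtrees, then a single member already contains both u and v. Hence, by induction on the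
  generation of Comp(H), every edge of Comp(H) containing u and v contains I(uv), so I(uv) is
  not a connected union of strictly smaller ones. Conversely, a basic set S induces a subtree,
  so it is the connected union of the sets I(xy) over the tree edges xy inside S; these lie in S,
  and since S is basic one of them is S itself.\<close>

definition adj :: "'a set \<Rightarrow> 'a set set \<Rightarrow> ('a \<times> 'a) set" where
  "adj S T = {(a, b). a \<in> S \<and> b \<in> S \<and> {a, b} \<in> T}"

lemma connected_graph_adj: "connected_graph S T \<longleftrightarrow> (\<forall>x\<in>S. \<forall>y\<in>S. (x, y) \<in> (adj S T)\<^sup>*)"
  by (simp add: connected_graph_def adj_def)

lemma adj_induced [simp]: "adj S (induced T S) = adj S T"
  by (auto simp: adj_def induced_def)

lemma connected_graph_induced: "connected_graph S (induced T S) \<longleftrightarrow> connected_graph S T"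
  by (simp add: connected_graph_adj)

lemma sym_adj: "sym (adj S T)"
  by (auto simp: sym_def adj_def insert_commute)

lemma rtrancl_adj_sym: "(a, b) \<in> (adj S T)\<^sup>* \<Longrightarrow> (b, a) \<in> (adj S T)\<^sup>*"
  by (metis sym_adj sym_conv_converse_eq sym_rtrancl symD)

lemma rtrancl_adj_mem: "(x, y) \<in> (adj S T)\<^sup>* \<Longrightarrow> x \<in> S \<Longrightarrow> y \<in> S"
  by (induction rule: rtrancl_induct) (auto simp: adj_def)

lemma connected_graph_neighbour:
  assumes "connected_graph S G" "w \<in> S" "w' \<in> S" "w \<noteq> w'"
  obtains y where "y \<in> S" "{w, y} \<in> G"
proof -
  have "(w, w') \<in> (adj S G)\<^sup>*" using assms by (simp add: connected_graph_adj)
  then show ?thesis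
    using assms(4) that by (cases rule: converse_rtranclE) (auto simp: adj_def)
qed

lemma rtrancl_adj_exit:
  assumes "(x, z) \<in> (adj V T)\<^sup>*" "x \<in> C"
  shows "z \<in> C \<or> (\<exists>a b. a \<in> C \<and> b \<notin> C \<and> {a, b} \<in> T \<and> (b, z) \<in> (adj V (T - {{a, b}}))\<^sup>*)"
  using assms(1)
proof (induction rule: rtrancl_induct)
  case base
  show ?case using assms(2) by simp
next
  case (step w w')
  then have ww: "{w, w'} \<in> T" "w \<in> V" "w' \<in> V" by (auto simp: adj_def)
  from step.IH show ?case
  proof
    assume "w \<in> C"
    then show ?case using ww by blast
  next
    assume "\<exists>a b. a \<in> C \<and> b \<notin> C \<and> {a, b} \<in> T \<and> (b, w) \<in> (adj V (T - {{a, b}}))\<^sup>*"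
    then obtain a b where ab: "a \<in> C" "b \<notin> C" "{a, b} \<in> T" "(b, w) \<in> (adj V (T - {{a, b}}))\<^sup>*"
      by blast
    show ?case
    proof (cases "{w, w'} = {a, b}")
      case True
      then have "w' = a \<or> w' = b" by (auto simp: doubleton_eq_iff)
      then show ?thesis using ab by blast
    next
      case False
      then have "(w, w') \<in> adj V (T - {{a, b}})" using ww by (auto simp: adj_def)
      then show ?thesis using ab by (blast intro: rtrancl_into_rtrancl)
    qed
  qed
qed

definition branch :: "'a set \<Rightarrow> 'a set set \<Rightarrow> 'a \<Rightarrow> 'a \<Rightarrow> 'a set" where
  "branch V T u v = {x. (u, x) \<in> (adj V (T - {{u, v}}))\<^sup>*}"

lemma branch_self: "u \<in> branch V T u v"
  by (simp add: branch_def)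

lemma branch_closed:
  "x \<in> branch V T u v \<Longrightarrow> (y, x) \<in> (adj V (T - {{u, v}}))\<^sup>* \<Longrightarrow> y \<in> branch V T u v"
  by (auto simp: branch_def dest: rtrancl_adj_sym)

lemma tree_edgeD:
  assumes "is_tree V T" "{u, v} \<in> T"
  shows "u \<noteq> v" "u \<in> V" "v \<in> V"
  using assms unfolding is_tree_def graph_on_def by (auto simp: doubleton_eq_iff)

lemma tree_edge_not_in_branch:
  assumes "is_tree V T" "{u, v} \<in> T"
  shows "v \<notin> branch V T u v"
proof
  let ?R = "adj V (T - {{u, v}})"
  assume "v \<in> branch V T u v"
  then have uv: "(u, v) \<in> ?R\<^sup>*" "(v, u) \<in> ?R\<^sup>*" by (auto simp: branch_def dest: rtrancl_adj_sym)
  have "adj V T \<subseteq> ?R\<^sup>*"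
  proof
    fix p assume "p \<in> adj V T"
    then show "p \<in> ?R\<^sup>*"
      using uv by (cases "p \<in> ?R") (auto simp: adj_def doubleton_eq_iff)
  qed
  then have "(adj V T)\<^sup>* \<subseteq> ?R\<^sup>*" by (rule rtrancl_subset_rtrancl)
  then have "connected_graph V (T - {{u, v}})"
    using assms(1) by (auto simp: is_tree_def connected_graph_adj)
  with assms show False by (auto simp: is_tree_def)
qed

lemma branches_disjoint:
  assumes "is_tree V T" "{u, v} \<in> T"
  shows "branch V T u v \<inter> branch V T v u = {}"
proof -
  have "v \<notin> branch V T u v" using tree_edge_not_in_branch[OF assms] .
  moreover have "branch V T v u = {x. (v, x) \<in> (adj V (T - {{u, v}}))\<^sup>*}"
    by (simp add: branch_def insert_commute)
  ultimately show ?thesis by (auto intro: branch_closed)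
qed

text \<open>An edge-wise form of "A induces a subtree of T" which, unlike connectedness, is
  obviously preserved by intersections.\<close>
definition tree_convex :: "'a set \<Rightarrow> 'a set set \<Rightarrow> 'a set \<Rightarrow> bool" where
  "tree_convex V T A \<longleftrightarrow>
     (\<forall>u v. {u, v} \<in> T \<longrightarrow> v \<notin> A \<longrightarrow> A \<inter> branch V T u v \<noteq> {} \<longrightarrow> A \<subseteq> branch V T u v)"

lemma tree_convexD:
  "tree_convex V T A \<Longrightarrow> {u, v} \<in> T \<Longrightarrow> v \<notin> A \<Longrightarrow> x \<in> A \<Longrightarrow> x \<in> branch V T u v
    \<Longrightarrow> A \<subseteq> branch V T u v"
  unfolding tree_convex_def by blast

lemma tree_convex_if_connected:
  assumes "A \<subseteq> V" "connected_graph A T"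
  shows "tree_convex V T A"
  unfolding tree_convex_def
proof (intro allI impI subsetI)
  fix u v y assume "{u, v} \<in> T" "v \<notin> A" "A \<inter> branch V T u v \<noteq> {}" "y \<in> A"
  then obtain x where x: "x \<in> A" "x \<in> branch V T u v" by blast
  have "adj A T \<subseteq> adj V (T - {{u, v}})"
    using assms(1) \<open>v \<notin> A\<close> by (auto simp: adj_def doubleton_eq_iff)
  moreover have "(y, x) \<in> (adj A T)\<^sup>*"
    using assms(2) x(1) \<open>y \<in> A\<close> by (simp add: connected_graph_adj)
  ultimately have "(y, x) \<in> (adj V (T - {{u, v}}))\<^sup>*" using rtrancl_mono by blast
  with x(2) show "y \<in> branch V T u v" by (rule branch_closed)
qed

lemma connected_if_tree_convex:
  assumes "is_tree V T" "A \<subseteq> V" "tree_convex V T A"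
  shows "connected_graph A T"
  unfolding connected_graph_adj
proof (intro ballI)
  fix x z assume "x \<in> A" "z \<in> A"
  define C where "C = {w. (x, w) \<in> (adj A T)\<^sup>*}"
  show "(x, z) \<in> (adj A T)\<^sup>*"
  proof (rule ccontr)
    assume "(x, z) \<notin> (adj A T)\<^sup>*"
    have "x \<in> C" "z \<notin> C" using \<open>(x, z) \<notin> (adj A T)\<^sup>*\<close> by (simp_all add: C_def)
    have "(x, z) \<in> (adj V T)\<^sup>*"
      using assms(1,2) \<open>x \<in> A\<close> \<open>z \<in> A\<close> by (auto simp: is_tree_def connected_graph_adj)
    from rtrancl_adj_exit[OF this \<open>x \<in> C\<close>] \<open>z \<notin> C\<close>
    obtain a b where ab: "a \<in> C" "b \<notin> C" "{a, b} \<in> T" "(b, z) \<in> (adj V (T - {{a, b}}))\<^sup>*"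
      by blast
    have "a \<in> A" using ab(1) \<open>x \<in> A\<close> rtrancl_adj_mem by (auto simp: C_def)
    have "b \<notin> A"
    proof
      assume "b \<in> A"
      then have "(a, b) \<in> adj A T" using \<open>a \<in> A\<close> ab(3) by (simp add: adj_def)
      with ab(1,2) show False by (auto simp: C_def intro: rtrancl_into_rtrancl)
    qed
    have "A \<subseteq> branch V T a b"
      using assms(3) ab(3) \<open>b \<notin> A\<close> \<open>a \<in> A\<close> branch_self by (rule tree_convexD)
    then have "z \<in> branch V T a b" using \<open>z \<in> A\<close> by blast
    then have "b \<in> branch V T a b" using ab(4) by (rule branch_closed)
    with tree_edge_not_in_branch[OF assms(1) ab(3)] show False ..
  qed
qed

lemma connected_family_propagate:
  assumes "connected_family F" "A \<in> F" "P A" "B \<in> F"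
    and "\<And>X Y. X \<in> F \<Longrightarrow> Y \<in> F \<Longrightarrow> X \<inter> Y \<noteq> {} \<Longrightarrow> P X \<Longrightarrow> P Y"
  shows "P B"
proof -
  have "(A, B) \<in> {(X, Y). X \<in> F \<and> Y \<in> F \<and> X \<inter> Y \<noteq> {}}\<^sup>*"
    using assms(1,2,4) unfolding connected_family_def by blast
  then show ?thesis by (induction rule: rtrancl_induct) (use assms(3,5) in auto)
qed

lemma tree_convex_Int: "tree_convex V T A \<Longrightarrow> tree_convex V T B \<Longrightarrow> tree_convex V T (A \<inter> B)"
  unfolding tree_convex_def by blast

lemma tree_convex_Union:
  assumes "connected_family F" "\<forall>A\<in>F. tree_convex V T A"
  shows "tree_convex V T (\<Union>F)"
  unfolding tree_convex_def
proof (intro allI impI)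
  fix u v assume uv: "{u, v} \<in> T" "v \<notin> \<Union>F" "\<Union>F \<inter> branch V T u v \<noteq> {}"
  then obtain A x where A: "A \<in> F" "x \<in> A" "x \<in> branch V T u v" by blast
  have "B \<subseteq> branch V T u v" if "B \<in> F" for B
  proof (rule connected_family_propagate[OF assms(1) A(1) _ that])
    show "A \<subseteq> branch V T u v"
      using assms(2) A uv(1,2) by (intro tree_convexD[of V T A u v x]) auto
    fix X Y assume "X \<in> F" "Y \<in> F" "X \<inter> Y \<noteq> {}" "X \<subseteq> branch V T u v"
    then obtain y where "y \<in> Y" "y \<in> branch V T u v" by blast
    then show "Y \<subseteq> branch V T u v"
      using assms(2) uv(1,2) \<open>Y \<in> F\<close> by (intro tree_convexD[of V T Y u v y]) auto
  qed
  then show "\<Union>F \<subseteq> branch V T u v" by blast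
qed

lemma gen_sets_tree_convex:
  assumes "hypergraph V E" "host_tree V E T" "A \<in> gen_sets E"
  shows "tree_convex V T A"
  using assms(3)
proof (induction rule: gen_sets.induct)
  case (base e)
  then show ?case using assms(1,2)
    by (auto simp: hypergraph_def host_tree_def connected_graph_induced intro: tree_convex_if_connected)
next
  case (inter A B)
  then show ?case by (simp add: tree_convex_Int)
next
  case (union F)
  then show ?case by (simp add: tree_convex_Union)
qed

lemma Comp_tree_convex:
  assumes "hypergraph V E" "host_tree V E T" "A \<in> Comp V E"
  shows "tree_convex V T A"
proof -
  have "is_tree V T" using assms(2) by (simp add: host_tree_def)
  consider "A = V" | w where "A = {w}" | "A \<in> gen_sets E"
    using assms(3) by (auto simp: Comp_def)
  then show ?thesis
  proof cases
    case 1
    then show ?thesis using tree_edgeD(3)[OF \<open>is_tree V T\<close>] by (auto simp: tree_convex_def)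
  next
    case 2
    then show ?thesis by (auto simp: tree_convex_def)
  next
    case 3
    then show ?thesis by (rule gen_sets_tree_convex[OF assms(1,2)])
  qed
qed

text \<open>Otherwise, F being connected, every member lies on the u-side of uv: a member containing v
  lies on the v-side and so cannot meet one on the u-side.\<close>
lemma connected_family_tree_edge:
  assumes "is_tree V T" "{u, v} \<in> T" "connected_family F" "\<forall>A\<in>F. tree_convex V T A"
    and "u \<in> \<Union>F" "v \<in> \<Union>F"
  obtains A where "A \<in> F" "u \<in> A" "v \<in> A"
proof (rule ccontr)
  assume "\<not> thesis"
  then have sep: "\<And>A. A \<in> F \<Longrightarrow> u \<in> A \<Longrightarrow> v \<notin> A" using that by blast
  obtain A where A: "A \<in> F" "u \<in> A" using assms(5) by blast
  have "B \<subseteq> branch V T u v" if "B \<in> F" for B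
  proof (rule connected_family_propagate[OF assms(3) A(1) _ that])
    show "A \<subseteq> branch V T u v"
      using assms(2,4) A sep by (intro tree_convexD[of V T A u v u]) (auto simp: branch_self)
    fix X Y assume XY: "X \<in> F" "Y \<in> F" "X \<inter> Y \<noteq> {}" "X \<subseteq> branch V T u v"
    obtain y where y: "y \<in> Y" "y \<in> branch V T u v" using XY(3,4) by blast
    show "Y \<subseteq> branch V T u v"
    proof (cases "v \<in> Y")
      case False
      then show ?thesis using assms(2,4) XY(2) y by (intro tree_convexD[of V T Y u v y]) auto
    next
      case True
      have "{v, u} \<in> T" using assms(2) by (simp add: insert_commute)
      then have "Y \<subseteq> branch V T v u"
        using assms(4) XY(2) True sep by (intro tree_convexD[of V T Y v u v]) (auto simp: branch_self)
      then show ?thesis using XY branches_disjoint[OF assms(1,2)] by blast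
    qed
  qed
  then have "v \<in> branch V T u v" using assms(6) by blast
  with tree_edge_not_in_branch[OF assms(1,2)] show False ..
qed

lemma I_H_subset_edge: "e \<in> E \<Longrightarrow> X \<subseteq> e \<Longrightarrow> I_H V E X \<subseteq> e"
  by (auto simp: I_H_def)

lemma I_H_subset_V:
  assumes "hypergraph V E"
  shows "I_H V E X \<subseteq> V"
proof (cases "\<exists>e\<in>E. X \<subseteq> e")
  case True
  then obtain e where "e \<in> E" "X \<subseteq> e" by blast
  then have "I_H V E X \<subseteq> e" by (rule I_H_subset_edge)
  also have "e \<subseteq> V" using assms \<open>e \<in> E\<close> by (simp add: hypergraph_def)
  finally show ?thesis .
qed (simp add: I_H_def)

lemma I_H_superset: "X \<subseteq> V \<Longrightarrow> X \<subseteq> I_H V E X"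
  by (auto simp: I_H_def)

lemma Inter_in_gen_sets:
  assumes "finite G" "G \<noteq> {}" "G \<subseteq> gen_sets E" "u \<in> \<Inter>G"
  shows "\<Inter>G \<in> gen_sets E"
  using assms
proof (induction G rule: finite_ne_induct)
  case (insert A G)
  then show ?case using gen_sets.inter[of A E "\<Inter>G"] by auto
qed simp

lemma I_H_in_Comp:
  assumes "hypergraph V E" "X \<noteq> {}"
  shows "I_H V E X \<in> Comp V E"
proof (cases "\<exists>e\<in>E. X \<subseteq> e")
  case True
  let ?G = "{e \<in> E. X \<subseteq> e}"
  obtain u where "u \<in> X" using assms(2) by blast
  have "\<Inter>?G \<in> gen_sets E"
    using assms(1) True \<open>u \<in> X\<close>
    by (intro Inter_in_gen_sets[of _ _ u]) (auto simp: hypergraph_def gen_sets.base)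
  then show ?thesis
    using True I_H_subset_V[OF assms(1), of X] by (auto simp: I_H_def Comp_def)
qed (simp add: I_H_def Comp_def)

lemma I_H_subset_gen_sets:
  assumes "hypergraph V E" "host_tree V E T" "A \<in> gen_sets E"
    and "{u, v} \<in> T" "u \<in> A" "v \<in> A"
  shows "I_H V E {u, v} \<subseteq> A"
  using assms(3-)
proof (induction rule: gen_sets.induct)
  case (base e)
  then show ?case by (simp add: I_H_subset_edge)
next
  case (inter A B)
  then show ?case by simp
next
  case (union F)
  have "is_tree V T" using assms(2) by (simp add: host_tree_def)
  moreover have "\<forall>A\<in>F. tree_convex V T A" using union(1) gen_sets_tree_convex[OF assms(1,2)] by blast
  ultimately obtain A where "A \<in> F" "u \<in> A" "v \<in> A"
    using union(3) union.prems(2,3) connected_family_tree_edge[OF _ assms(4)] by blast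
  then show ?case using union(1) assms(4) by blast
qed

lemma I_H_subset_Comp:
  assumes "hypergraph V E" "host_tree V E T" "A \<in> Comp V E"
    and "{u, v} \<in> T" "u \<in> A" "v \<in> A"
  shows "I_H V E {u, v} \<subseteq> A"
proof -
  have "is_tree V T" using assms(2) by (simp add: host_tree_def)
  then have "u \<noteq> v" using assms(4) by (rule tree_edgeD(1))
  consider "A = V" | w where "A = {w}" | "A \<in> gen_sets E"
    using assms(3) by (auto simp: Comp_def)
  then show ?thesis
  proof cases
    case 1
    then show ?thesis using I_H_subset_V[OF assms(1)] by simp
  next
    case 2
    then show ?thesis using assms(5,6) \<open>u \<noteq> v\<close> by simp
  next
    case 3
    then show ?thesis using I_H_subset_gen_sets[OF assms(1,2) _ assms(4-)] by simp
  qed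
qed

lemma connected_family_edge_sets:
  assumes "connected_graph S G" "x0 \<in> S" "y0 \<in> S" "{x0, y0} \<in> G"
    and "\<And>x y. x \<in> S \<Longrightarrow> y \<in> S \<Longrightarrow> {x, y} \<in> G \<Longrightarrow> {x, y} \<subseteq> f {x, y}"
  shows "connected_family {f {x, y} | x y. x \<in> S \<and> y \<in> S \<and> {x, y} \<in> G}"
    (is "connected_family ?F")
proof -
  let ?R = "{(X, Y). X \<in> ?F \<and> Y \<in> ?F \<and> X \<inter> Y \<noteq> {}}"
  have F: "f {x, y} \<in> ?F" if "x \<in> S" "y \<in> S" "{x, y} \<in> G" for x y
    using that by blast
  have R: "(f {x, y}, f {x', y'}) \<in> ?R"
    if "x \<in> S" "y \<in> S" "{x, y} \<in> G" "x' \<in> S" "y' \<in> S" "{x', y'} \<in> G" "x = x'" for x y x' y'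
  proof -
    have "x \<in> f {x, y}" "x' \<in> f {x', y'}" using assms(5) that by blast+
    then show ?thesis using F[OF that(1-3)] F[OF that(4-6)] \<open>x = x'\<close> by blast
  qed
  have reach: "\<exists>y. y \<in> S \<and> {w, y} \<in> G \<and> (f {x, y'}, f {w, y}) \<in> ?R\<^sup>*"
    if "x \<in> S" "y' \<in> S" "{x, y'} \<in> G" "(x, w) \<in> (adj S G)\<^sup>*" for x y' w
    using that(4)
  proof (induction rule: rtrancl_induct)
    case base
    then show ?case using that(1-3) by blast
  next
    case (step w w')
    then obtain y where y: "y \<in> S" "{w, y} \<in> G" "(f {x, y'}, f {w, y}) \<in> ?R\<^sup>*" by blast
    have w: "w \<in> S" "w' \<in> S" "{w, w'} \<in> G" using step(2) by (auto simp: adj_def)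
    have "(f {w, y}, f {w, w'}) \<in> ?R" using R y(1,2) w by blast
    with y(3) have "(f {x, y'}, f {w, w'}) \<in> ?R\<^sup>*" by (rule rtrancl_into_rtrancl)
    then show ?case using w by (intro exI[of _ w]) (simp add: insert_commute)
  qed
  show ?thesis
    unfolding connected_family_def
  proof (intro conjI ballI)
    show "?F \<noteq> {}" using F[OF assms(2-4)] by blast
    fix A B assume "A \<in> ?F" "B \<in> ?F"
    then obtain x1 y1 x2 y2 where e: "A = f {x1, y1}" "x1 \<in> S" "y1 \<in> S" "{x1, y1} \<in> G"
        "B = f {x2, y2}" "x2 \<in> S" "y2 \<in> S" "{x2, y2} \<in> G"
      by auto
    have "(x1, x2) \<in> (adj S G)\<^sup>*" using assms(1) e by (simp add: connected_graph_adj)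
    then obtain y where y: "y \<in> S" "{x2, y} \<in> G" "(A, f {x2, y}) \<in> ?R\<^sup>*"
      using reach e(1-4) by blast
    moreover have "(f {x2, y}, B) \<in> ?R" using R y(1,2) e(5-8) by blast
    ultimately show "(A, B) \<in> ?R\<^sup>*" by (meson rtrancl_into_rtrancl)
  qed
qed

lemma basic_set_I_H_tree_edge:
  assumes "hypergraph V E" "host_tree V E T" "{u, v} \<in> T"
  shows "basic_set V E (I_H V E {u, v})"
proof -
  let ?S = "I_H V E {u, v}"
  have "is_tree V T" using assms(2) by (simp add: host_tree_def)
  note uv = tree_edgeD[OF this assms(3)]
  have uv_S: "u \<in> ?S" "v \<in> ?S" using uv(2,3) I_H_superset[of "{u, v}" V E] by simp_all
  have "finite ?S"
    using I_H_subset_V[OF assms(1)] assms(1) by (meson finite_subset hypergraph_def)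
  then have "card {u, v} \<le> card ?S" using uv_S by (intro card_mono) simp_all
  then have card: "card ?S > 1" using uv(1) by simp
  have not_union: "\<not> (F \<subseteq> Comp V E \<and> connected_family F \<and> (\<forall>A\<in>F. A \<subset> ?S) \<and> \<Union>F = ?S)" for F
  proof
    assume F: "F \<subseteq> Comp V E \<and> connected_family F \<and> (\<forall>A\<in>F. A \<subset> ?S) \<and> \<Union>F = ?S"
    have "connected_family F" using F by blast
    moreover have "\<forall>A\<in>F. tree_convex V T A" using F Comp_tree_convex[OF assms(1,2)] by blast
    moreover have "u \<in> \<Union>F" "v \<in> \<Union>F" using F uv_S by simp_all
    ultimately obtain A where A: "A \<in> F" "u \<in> A" "v \<in> A"
      by (rule connected_family_tree_edge[OF \<open>is_tree V T\<close> assms(3)])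
    have "A \<in> Comp V E" using A(1) F by blast
    then have "?S \<subseteq> A" using assms(3) A(2,3) by (rule I_H_subset_Comp[OF assms(1,2)])
    moreover have "A \<subset> ?S" using A(1) F by blast
    ultimately show False by blast
  qed
  have "?S \<in> Comp V E" by (rule I_H_in_Comp[OF assms(1)]) simp
  with card not_union show ?thesis unfolding basic_set_def by blast
qed

lemma basic_set_eq_I_H_tree_edge:
  assumes "hypergraph V E" "host_tree V E T" "basic_set V E S"
  obtains u v where "{u, v} \<in> T" "S = I_H V E {u, v}"
proof -
  have "is_tree V T" using assms(2) by (simp add: host_tree_def)
  have S_Comp: "S \<in> Comp V E" and "card S > 1" using assms(3) by (auto simp: basic_set_def)
  have "S \<subseteq> V" using S_Comp by (auto simp: Comp_def)
  have conn: "connected_graph S T"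
    using \<open>is_tree V T\<close> \<open>S \<subseteq> V\<close> Comp_tree_convex[OF assms(1,2) S_Comp]
    by (rule connected_if_tree_convex)
  have nbr: "\<exists>y\<in>S. {w, y} \<in> T" if "w \<in> S" for w
  proof -
    have "S \<noteq> {w}" using \<open>card S > 1\<close> by auto
    then obtain w' where "w' \<in> S" "w' \<noteq> w" using \<open>w \<in> S\<close> by blast
    then show ?thesis using connected_graph_neighbour[OF conn \<open>w \<in> S\<close>] by metis
  qed
  obtain x0 where "x0 \<in> S" using \<open>card S > 1\<close> by fastforce
  with nbr obtain y0 where "y0 \<in> S" "{x0, y0} \<in> T" by blast
  define F where "F = {I_H V E {x, y} | x y. x \<in> S \<and> y \<in> S \<and> {x, y} \<in> T}"
  have "connected_family F"
    unfolding F_def using conn \<open>x0 \<in> S\<close> \<open>y0 \<in> S\<close> \<open>{x0, y0} \<in> T\<close>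
  proof (rule connected_family_edge_sets)
    show "{x, y} \<subseteq> I_H V E {x, y}" if "x \<in> S" "y \<in> S" for x y
      using that \<open>S \<subseteq> V\<close> by (intro I_H_superset) auto
  qed
  moreover have "F \<subseteq> Comp V E" using assms(1) by (auto simp: F_def I_H_in_Comp)
  moreover have F_S: "\<forall>A\<in>F. A \<subseteq> S" using I_H_subset_Comp[OF assms(1,2) S_Comp] by (auto simp: F_def)
  moreover have "\<Union>F = S"
  proof
    show "S \<subseteq> \<Union>F"
    proof
      fix w assume "w \<in> S"
      with nbr obtain y where "y \<in> S" "{w, y} \<in> T" by blast
      then have "I_H V E {w, y} \<in> F" using \<open>w \<in> S\<close> by (auto simp: F_def)
      moreover have "{w, y} \<subseteq> I_H V E {w, y}"
        using \<open>w \<in> S\<close> \<open>y \<in> S\<close> \<open>S \<subseteq> V\<close> by (intro I_H_superset) auto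
      ultimately show "w \<in> \<Union>F" by blast
    qed
  qed (use F_S in blast)
  ultimately obtain A where "A \<in> F" "\<not> A \<subset> S" using assms(3) unfolding basic_set_def by blast
  then show ?thesis using F_S that by (auto simp: F_def)
qed

theorem mainTheorem4:
  fixes V :: "'a set" and E :: "'a set set" and T :: "'a set set"
  assumes "hypertree V E"
    and "host_tree V E T"
  shows "(\<forall>u v. {u, v} \<in> T \<longrightarrow> basic_set V E (I_H V E {u, v}))
       \<and> (\<forall>S. basic_set V E S \<longrightarrow> (\<exists>u v. {u, v} \<in> T \<and> S = I_H V E {u, v}))"
proof -
  have "hypergraph V E" using assms(1) by (simp add: hypertree_def)
  then show ?thesis
    using basic_set_I_H_tree_edge basic_set_eq_I_H_tree_edge assms(2) by metis
qed

end
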